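(* For every $c\in V$, the function $h^c_{YX}:[0,\|c\|_X]\to[0,\|c\|_Y]$ is Lipschitz continuous.
   Context: $V$ is a finite dimensional real vector space with a positive definite symmetric bilinear form $\langle\cdot,\cdot\rangle$ and $\|v\|_2=\sqrt{\langle v,v\rangle}$; $\|\cdot\|_X$ is a norm with dual norm $\|v\|_Y=\max\{\langle v,w\rangle:\|w\|_X=1\}$. For $x\in[0,\|c\|_X]$, $\alpha^c_{2X}(x)$ is the unique minimizer of $\|c-a\|_2$ subject to $\|a\|_X\le x$, and $h^c_{YX}(x)=\|c-\alpha^c_{2X}(x)\|_Y$. *)

theory Defs
  imports "HOL-Analysis.Analysis"
begin

text \<open>V is modelled by a type of class euclidean_space: a finite-dimensional real
  inner product space; its inner product and norm are the form and the 2-norm.\<close>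

definition is_norm :: "('a::real_vector \<Rightarrow> real) \<Rightarrow> bool" where
  "is_norm N \<longleftrightarrow>
     (\<forall>v. 0 \<le> N v) \<and> (\<forall>v. N v = 0 \<longleftrightarrow> v = 0) \<and>
     (\<forall>r v. N (r *\<^sub>R v) = \<bar>r\<bar> * N v) \<and> (\<forall>v w. N (v + w) \<le> N v + N w)"

definition dual_norm :: "('a::real_inner \<Rightarrow> real) \<Rightarrow> 'a \<Rightarrow> real" where
  "dual_norm N v = Sup ((\<lambda>w. inner v w) ` {w. N w = 1})"

definition alpha2X :: "('a::real_inner \<Rightarrow> real) \<Rightarrow> 'a \<Rightarrow> real \<Rightarrow> 'a" where
  "alpha2X N c x = (THE a. N a \<le> x \<and> (\<forall>b. N b \<le> x \<longrightarrow> norm (c - a) \<le> norm (c - b)))"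

definition hYX :: "('a::real_inner \<Rightarrow> real) \<Rightarrow> 'a \<Rightarrow> real \<Rightarrow> real" where
  "hYX N c x = dual_norm N (c - alpha2X N c x)"

end

theory Submission
  imports Defs
begin

text \<open>The minimizer \<open>alpha2X N c x\<close> is the Euclidean projection of \<open>c\<close> onto the convex
  sublevel set \<open>{a. N a \<le> x}\<close>. As \<open>{a. N a \<le> t} = (t / s) *\<^sub>R {a. N a \<le> s}\<close>, rescaling the
  projection for one radius gives an admissible competitor for the other, and adding the two
  variational inequalities yields \<open>norm (alpha2X N c t - alpha2X N c s) \<le> K * \<bar>t - s\<bar>\<close>, where
  \<open>norm \<le> K * N\<close> by compactness of the Euclidean unit sphere. The dual norm is subadditive and
  bounded by \<open>K * norm\<close>, hence \<open>K\<close>-Lipschitz, so \<open>hYX N c\<close> is \<open>K * K\<close>-Lipschitz.\<close>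

lemma
  assumes "is_norm N"
  shows is_norm_nonneg: "0 \<le> N v"
    and is_norm_eq_0_iff: "N v = 0 \<longleftrightarrow> v = 0"
    and is_norm_scaleR: "N (r *\<^sub>R v) = \<bar>r\<bar> * N v"
    and is_norm_triangle: "N (v + w) \<le> N v + N w"
  using assms unfolding is_norm_def by blast+

lemma is_norm_zero [simp]: "is_norm N \<Longrightarrow> N 0 = 0"
  by (simp add: is_norm_eq_0_iff)

lemma is_norm_convex_on:
  assumes "is_norm N"
  shows "convex_on UNIV N"
proof (rule convex_onI)
  fix t :: real and x y assume "0 < t" "t < 1"
  have "N ((1 - t) *\<^sub>R x + t *\<^sub>R y) \<le> N ((1 - t) *\<^sub>R x) + N (t *\<^sub>R y)"
    by (rule is_norm_triangle[OF assms])
  also have "\<dots> = (1 - t) * N x + t * N y"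
    using \<open>0 < t\<close> \<open>t < 1\<close> by (simp add: is_norm_scaleR[OF assms])
  finally show "N ((1 - t) *\<^sub>R x + t *\<^sub>R y) \<le> (1 - t) * N x + t * N y" .
qed simp

lemma continuous_on_is_norm:
  fixes N :: "'a::euclidean_space \<Rightarrow> real"
  assumes "is_norm N"
  shows "continuous_on S N"
  using convex_on_continuous[OF open_UNIV is_norm_convex_on[OF assms]]
  by (rule continuous_on_subset) simp

lemma convex_is_norm_sublevel:
  assumes "is_norm N"
  shows "convex {a. N a \<le> x}"
proof (rule convexI)
  fix a b and u v :: real assume "a \<in> {a. N a \<le> x}" "b \<in> {a. N a \<le> x}" "0 \<le> u" "0 \<le> v" "u + v = 1"
  then show "u *\<^sub>R a + v *\<^sub>R b \<in> {a. N a \<le> x}"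
    using convex_lower[OF is_norm_convex_on[OF assms], of a b u v] by simp
qed

lemma closed_is_norm_sublevel:
  fixes N :: "'a::euclidean_space \<Rightarrow> real"
  assumes "is_norm N"
  shows "closed {a. N a \<le> x}"
  by (rule closed_Collect_le) (auto intro: continuous_on_is_norm[OF assms])

lemma is_norm_unit_exists:
  fixes N :: "'a::euclidean_space \<Rightarrow> real"
  assumes "is_norm N"
  shows "\<exists>w. N w = 1"
proof -
  obtain u :: 'a where "u \<noteq> 0"
    using vector_choose_size[of 1] by force
  then have "N u > 0"
    using is_norm_nonneg[OF assms] is_norm_eq_0_iff[OF assms] by (metis less_eq_real_def)
  then have "N ((1 / N u) *\<^sub>R u) = 1"
    by (simp add: is_norm_scaleR[OF assms])
  then show ?thesis ..
qed

lemma norm_le_mult_is_norm: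
  fixes N :: "'a::euclidean_space \<Rightarrow> real"
  assumes "is_norm N"
  obtains K where "K > 0" "\<And>v. norm v \<le> K * N v"
proof -
  have "sphere (0::'a) 1 \<noteq> {}"
    using vector_choose_size[of 1] by auto
  then obtain u where u: "norm u = 1" "\<And>w. norm w = 1 \<Longrightarrow> N u \<le> N w"
    using continuous_attains_inf[OF compact_sphere _ continuous_on_is_norm[OF assms], of 0 1]
    by (metis mem_sphere_0)
  have pos: "N u > 0"
    using u(1) is_norm_nonneg[OF assms] is_norm_eq_0_iff[OF assms]
    by (metis less_eq_real_def norm_zero zero_neq_one)
  show thesis
  proof
    show "1 / N u > 0" using pos by simp
    fix v :: 'a
    show "norm v \<le> 1 / N u * N v"
    proof (cases "v = 0")
      case False
      have "N u \<le> N ((1 / norm v) *\<^sub>R v)" by (rule u(2)) (use False in simp)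
      also have "\<dots> = N v / norm v" by (simp add: is_norm_scaleR[OF assms])
      finally show ?thesis using False pos by (simp add: field_simps)
    qed (simp add: is_norm_nonneg[OF assms] pos)
  qed
qed

lemma alpha2X_eq_closest_point:
  fixes N :: "'a::euclidean_space \<Rightarrow> real"
  assumes "is_norm N" "0 \<le> x"
  shows "alpha2X N c x = closest_point {a. N a \<le> x} c"
proof -
  let ?S = "{a. N a \<le> x}"
  note closed = closed_is_norm_sublevel[OF assms(1), of x]
  have "0 \<in> ?S" using assms by simp
  then have "closest_point ?S c \<in> ?S \<and> (\<forall>b\<in>?S. dist c (closest_point ?S c) \<le> dist c b)"
    using closest_point_exists[OF closed] by blast
  then show ?thesis
    unfolding alpha2X_def
    by (intro the_equality)
       (auto simp: dist_norm intro: closest_point_unique[OF convex_is_norm_sublevel[OF assms(1)] closed])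
qed

lemma
  fixes N :: "'a::euclidean_space \<Rightarrow> real"
  assumes "is_norm N" "0 \<le> x"
  shows alpha2X_le: "N (alpha2X N c x) \<le> x"
    and alpha2X_variational: "N y \<le> x \<Longrightarrow> inner (c - alpha2X N c x) (y - alpha2X N c x) \<le> 0"
proof -
  let ?S = "{a. N a \<le> x}"
  note closed = closed_is_norm_sublevel[OF assms(1), of x]
  have "0 \<in> ?S" using assms by simp
  then show "N (alpha2X N c x) \<le> x"
    using closest_point_in_set[OF closed] alpha2X_eq_closest_point[OF assms] by auto
  show "inner (c - alpha2X N c x) (y - alpha2X N c x) \<le> 0" if "N y \<le> x"
    using closest_point_dot[OF convex_is_norm_sublevel[OF assms(1)] closed, of y c] that
    by (simp add: alpha2X_eq_closest_point[OF assms] inner_commute)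
qed

lemma alpha2X_zero:
  fixes N :: "'a::euclidean_space \<Rightarrow> real"
  assumes "is_norm N"
  shows "alpha2X N c 0 = 0"
  using alpha2X_le[OF assms order_refl, of c] is_norm_nonneg[OF assms, of "alpha2X N c 0"]
  by (simp add: is_norm_eq_0_iff[OF assms])

lemma alpha2X_rescaled_variational:
  fixes N :: "'a::euclidean_space \<Rightarrow> real"
  assumes "is_norm N" "0 \<le> s" "0 \<le> t"
  shows "inner (c - alpha2X N c t) (t *\<^sub>R alpha2X N c s - s *\<^sub>R alpha2X N c t) \<le> 0"
proof (cases "s = 0")
  case True
  then show ?thesis by (simp add: alpha2X_zero[OF assms(1)])
next
  case False
  with assms(2) have "s > 0" by simp
  have "N ((t / s) *\<^sub>R alpha2X N c s) = (t / s) * N (alpha2X N c s)"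
    using \<open>s > 0\<close> assms(3) by (simp add: is_norm_scaleR[OF assms(1)])
  also have "\<dots> \<le> (t / s) * s"
    using \<open>s > 0\<close> assms(3) by (intro mult_left_mono alpha2X_le[OF assms(1,2)]) simp
  finally have "inner (c - alpha2X N c t) ((t / s) *\<^sub>R alpha2X N c s - alpha2X N c t) \<le> 0"
    using \<open>s > 0\<close> by (intro alpha2X_variational[OF assms(1,3)]) simp
  moreover have "t *\<^sub>R alpha2X N c s - s *\<^sub>R alpha2X N c t
      = s *\<^sub>R ((t / s) *\<^sub>R alpha2X N c s - alpha2X N c t)"
    using \<open>s > 0\<close> by (simp add: scaleR_diff_right)
  ultimately show ?thesis
    using \<open>s > 0\<close> by (simp add: mult_nonneg_nonpos)
qed

lemma alpha2X_lipschitz: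
  fixes N :: "'a::euclidean_space \<Rightarrow> real"
  assumes "is_norm N" "0 \<le> K" "\<And>v. norm v \<le> K * N v"
  shows "K-lipschitz_on {0..} (alpha2X N c)"
proof (rule lipschitz_on_leI)
  fix s t :: real assume "s \<in> {0..}" "t \<in> {0..}" "s \<le> t"
  then have "0 \<le> s" "0 \<le> t" by auto
  define a b where "a = alpha2X N c t" and "b = alpha2X N c s"
  have "inner (c - a) (t *\<^sub>R b - s *\<^sub>R a) \<le> 0" "inner (c - b) (s *\<^sub>R a - t *\<^sub>R b) \<le> 0"
    unfolding a_def b_def
    by (intro alpha2X_rescaled_variational[OF assms(1)] \<open>0 \<le> s\<close> \<open>0 \<le> t\<close>)+
  moreover have "inner (b - a) (t *\<^sub>R b - s *\<^sub>R a)
      = inner (c - a) (t *\<^sub>R b - s *\<^sub>R a) + inner (c - b) (s *\<^sub>R a - t *\<^sub>R b)"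
    by (simp add: inner_diff_left inner_diff_right inner_commute algebra_simps)
  moreover have "inner (b - a) (t *\<^sub>R b - s *\<^sub>R a) = t * (norm (b - a))\<^sup>2 + (t - s) * inner (b - a) a"
    by (simp add: power2_norm_eq_inner inner_diff_left inner_diff_right algebra_simps)
  ultimately have "t * (norm (b - a))\<^sup>2 \<le> (t - s) * - inner (b - a) a"
    by linarith
  also have "\<dots> \<le> (t - s) * (norm (b - a) * norm a)"
    using \<open>s \<le> t\<close> by (intro mult_left_mono abs_le_D2[OF Cauchy_Schwarz_ineq2]) simp
  also have "\<dots> \<le> (t - s) * (norm (b - a) * (K * t))"
  proof -
    have "norm a \<le> K * t"
      using assms(3)[of a] mult_left_mono[OF alpha2X_le[OF assms(1) \<open>0 \<le> t\<close>, of c] assms(2)]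
      unfolding a_def by linarith
    then show ?thesis
      using \<open>s \<le> t\<close> by (simp add: mult_left_mono)
  qed
  finally have "t * (norm (b - a) * norm (b - a)) \<le> t * (norm (b - a) * (K * (t - s)))"
    by (simp add: power2_eq_square algebra_simps)
  then have "norm (b - a) \<le> K * (t - s)" if "t > 0" "b \<noteq> a"
    using that by (simp add: mult_le_cancel_left_pos)
  moreover have "b = a" if "t = 0"
    using that \<open>0 \<le> s\<close> \<open>s \<le> t\<close> by (simp add: a_def b_def)
  ultimately have "norm (b - a) \<le> K * (t - s)"
    using \<open>0 \<le> s\<close> \<open>s \<le> t\<close> assms(2) by (cases "t = 0 \<or> b = a") auto
  then show "dist (alpha2X N c s) (alpha2X N c t) \<le> K * dist s t"
    using \<open>s \<le> t\<close> by (simp add: a_def b_def dist_norm dist_real_def)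
qed (fact assms(2))

lemma
  fixes N :: "'a::euclidean_space \<Rightarrow> real"
  assumes "is_norm N" "0 \<le> K" "\<And>v. norm v \<le> K * N v"
  shows inner_le_dual_norm: "N w = 1 \<Longrightarrow> inner v w \<le> dual_norm N v"
    and dual_norm_le_norm: "dual_norm N v \<le> K * norm v"
proof -
  have inner_le: "inner v w \<le> K * norm v" if "N w = 1" for w
  proof -
    have "inner v w \<le> norm v * norm w" by (rule norm_cauchy_schwarz)
    also have "\<dots> \<le> norm v * K" using assms(3)[of w] that by (simp add: mult_left_mono)
    finally show ?thesis by (simp add: mult.commute)
  qed
  show "inner v w \<le> dual_norm N v" if "N w = 1"
    unfolding dual_norm_def using that inner_le
    by (intro cSup_upper) (auto intro!: bdd_aboveI2)
  show "dual_norm N v \<le> K * norm v"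
    unfolding dual_norm_def using is_norm_unit_exists[OF assms(1)] inner_le
    by (intro cSup_least) auto
qed

lemma dual_norm_triangle:
  fixes N :: "'a::euclidean_space \<Rightarrow> real"
  assumes "is_norm N" "0 \<le> K" "\<And>v. norm v \<le> K * N v"
  shows "dual_norm N (v + w) \<le> dual_norm N v + dual_norm N w"
  unfolding dual_norm_def[of N "v + w"] using is_norm_unit_exists[OF assms(1)]
  by (intro cSup_least)
     (auto simp: inner_add_left intro: add_mono inner_le_dual_norm[OF assms])

lemma dual_norm_lipschitz:
  fixes N :: "'a::euclidean_space \<Rightarrow> real"
  assumes "is_norm N" "0 \<le> K" "\<And>v. norm v \<le> K * N v"
  shows "K-lipschitz_on S (dual_norm N)"
proof (rule lipschitz_onI)
  fix v w :: 'a
  have "dual_norm N v - dual_norm N w \<le> K * norm (v - w)"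
    using dual_norm_triangle[OF assms, of "v - w" w] dual_norm_le_norm[OF assms, of "v - w"] by simp
  moreover have "dual_norm N w - dual_norm N v \<le> K * norm (v - w)"
    using dual_norm_triangle[OF assms, of "w - v" v] dual_norm_le_norm[OF assms, of "w - v"]
    by (simp add: norm_minus_commute)
  ultimately show "dist (dual_norm N v) (dual_norm N w) \<le> K * dist v w"
    by (simp add: dist_real_def dist_norm)
qed (fact assms(2))

theorem mainTheorem9:
  fixes N :: "'a::euclidean_space \<Rightarrow> real" and c :: 'a
  assumes "is_norm N"
  shows "\<exists>L. L-lipschitz_on {0..N c} (hYX N c)"
proof -
  obtain K where K: "K > 0" "\<And>v. norm v \<le> K * N v"
    using norm_le_mult_is_norm[OF assms] by blast
  have "(0 + K)-lipschitz_on {0..N c} (\<lambda>x. c - alpha2X N c x)"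
    using alpha2X_lipschitz[OF assms _ K(2), of c] K(1)
    by (intro lipschitz_on_diff lipschitz_on_constant) (auto elim: lipschitz_on_subset)
  then have "(K * K)-lipschitz_on {0..N c} (\<lambda>x. dual_norm N (c - alpha2X N c x))"
    using dual_norm_lipschitz[OF assms _ K(2)] K(1) by (intro lipschitz_on_compose2) simp_all
  then show ?thesis
    unfolding hYX_def by blast
qed

end
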